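(* If $G=\prod_{i=1}^tK[a_i,b_i]$ with $2\le b_1\le\cdots\le b_t$, then $$\mathrm{IR}(G)\le\frac{b_1}{2b_1-1}\prod_{i=1}^ta_ib_i.$$
   Context: $K[a,b]$ is the balanced complete $b$-partite graph with $b$ parts of size $a$ (vertices adjacent iff in different parts); $\prod$ denotes the direct product of graphs ($(g_1,h_1)\sim(g_2,h_2)$ iff $g_1\sim g_2$ and $h_1\sim h_2$). A set $S$ is irredundant if every $v\in S$ has a private neighbor, i.e. a vertex in $N[v]\setminus N[S\setminus\{v\}]$ (closed neighborhoods). $\mathrm{IR}(G)$ is the maximum size of an irredundant set. *)

theory Defs
  imports Complex_Main
begin

text \<open>A (simple) graph is given by a vertex set V and a symmetric adjacency relation E.\<close>

definition closed_nbhd :: "'v set \<Rightarrow> ('v \<Rightarrow> 'v \<Rightarrow> bool) \<Rightarrow> 'v \<Rightarrow> 'v set" where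
  "closed_nbhd V E v = {u \<in> V. E v u} \<union> {v}"

definition closed_nbhd_set :: "'v set \<Rightarrow> ('v \<Rightarrow> 'v \<Rightarrow> bool) \<Rightarrow> 'v set \<Rightarrow> 'v set" where
  "closed_nbhd_set V E S = (\<Union>v\<in>S. closed_nbhd V E v)"

definition irredundant :: "'v set \<Rightarrow> ('v \<Rightarrow> 'v \<Rightarrow> bool) \<Rightarrow> 'v set \<Rightarrow> bool" where
  "irredundant V E S \<longleftrightarrow> S \<subseteq> V \<and>
     (\<forall>v\<in>S. \<exists>u. u \<in> closed_nbhd V E v - closed_nbhd_set V E (S - {v}))"

definition IR :: "'v set \<Rightarrow> ('v \<Rightarrow> 'v \<Rightarrow> bool) \<Rightarrow> nat" where
  "IR V E = Max {card S | S. irredundant V E S}"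

text \<open>Direct product of K[a_i,b_i], i = 1..t.  A vertex is a function v with
  v i = (x, p) for 1 \<le> i \<le> t, where p < b i is the part and x < a i the position
  inside the part; v i = (0,0) outside 1..t.\<close>

definition prodK_verts :: "nat \<Rightarrow> (nat \<Rightarrow> nat) \<Rightarrow> (nat \<Rightarrow> nat) \<Rightarrow> (nat \<Rightarrow> nat \<times> nat) set" where
  "prodK_verts t a b = {v. (\<forall>i\<in>{1..t}. fst (v i) < a i \<and> snd (v i) < b i)
                           \<and> (\<forall>i. i \<notin> {1..t} \<longrightarrow> v i = (0, 0))}"

definition prodK_adj :: "nat \<Rightarrow> (nat \<Rightarrow> nat \<times> nat) \<Rightarrow> (nat \<Rightarrow> nat \<times> nat) \<Rightarrow> bool" where
  "prodK_adj t v w \<longleftrightarrow> (\<forall>i\<in>{1..t}. snd (v i) \<noteq> snd (w i))"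

end

theory Submission
  imports Defs "HOL-Library.FuncSet"
begin

text \<open>The bound already holds with the factor 1/2 in place of b1/(2 b1 - 1), and without
  the hypothesis a_i \<ge> 1.
  Suppose the graph carries an injective self-map f of its vertices with every v adjacent
  to f v. An irredundant set S then injects into its complement: a vertex of S with a
  neighbour in S goes to a private neighbour, which lies outside S and differs from the
  vertex itself; a vertex of S without neighbours in S goes to its image under f. Private
  neighbours are never shared, so this map is injective and |S| \<le> n/2. In the product of
  the K[a_i,b_i] such an f is obtained by cyclically shifting the part in every coordinate.\<close>

lemma closed_nbhd_iff: "x \<in> closed_nbhd V E v \<longleftrightarrow> (x \<in> V \<and> E v x) \<or> x = v"
  unfolding closed_nbhd_def by blast

lemma closed_nbhd_set_iff: "x \<in> closed_nbhd_set V E A \<longleftrightarrow> (\<exists>v\<in>A. x \<in> closed_nbhd V E v)"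
  unfolding closed_nbhd_set_def by blast

lemma private_neighbour_notin:
  assumes "p \<notin> closed_nbhd_set V E (S - {s})" "s' \<in> S" "s' \<noteq> s"
  shows "p \<notin> closed_nbhd V E s'"
  using assms by (auto simp: closed_nbhd_set_iff)

lemma irredundant_card_le_half:
  assumes fin: "finite V" and irr: "irredundant V E S"
    and sym: "\<And>u v. E u v \<Longrightarrow> E v u"
    and f_into: "\<And>v. v \<in> V \<Longrightarrow> f v \<in> V" and f_inj: "inj_on f V"
    and loopless: "\<And>v. \<not> E v v" and f_adj: "\<And>v. v \<in> V \<Longrightarrow> E v (f v)"
  shows "2 * card S \<le> card V"
proof -
  have f_neq: "f v \<noteq> v" if "v \<in> V" for v using that f_adj loopless by metis
  have SV: "S \<subseteq> V" using irr unfolding irredundant_def by blast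
  obtain p where p: "\<And>s. s \<in> S \<Longrightarrow> p s \<in> closed_nbhd V E s"
      "\<And>s. s \<in> S \<Longrightarrow> p s \<notin> closed_nbhd_set V E (S - {s})"
    using irr unfolding irredundant_def by (metis Diff_iff)
  define isolated where "isolated = {s\<in>S. \<forall>s'\<in>S. s' \<noteq> s \<longrightarrow> \<not> E s' s}"
  define g where "g s = (if s \<in> isolated then f s else p s)" for s
  have g_nbhd: "g s \<in> closed_nbhd V E s" if "s \<in> S" for s
    using that SV f_into f_adj p(1) by (auto simp: g_def closed_nbhd_iff)
  have g_outside: "g s \<in> V - S" if s: "s \<in> S" for s
  proof (cases "s \<in> isolated")
    case True
    have "f s \<notin> S"
    proof
      assume "f s \<in> S"
      moreover have "E (f s) s" using s SV by (meson sym f_adj subsetD)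
      ultimately show False using True f_neq s SV unfolding isolated_def by blast
    qed
    then show ?thesis using True s SV f_into by (auto simp: g_def)
  next
    case False
    then obtain s' where s': "s' \<in> S" "s' \<noteq> s" "E s' s" using s unfolding isolated_def by blast
    have "p s \<noteq> s"
      using private_neighbour_notin[OF p(2)[OF s] s'(1,2)] s' s SV by (auto simp: closed_nbhd_iff)
    moreover have "p s \<notin> S - {s}"
      using private_neighbour_notin[OF p(2)[OF s]] by (auto simp: closed_nbhd_iff)
    moreover have "p s \<in> V" using p(1)[OF s] s SV by (auto simp: closed_nbhd_iff)
    ultimately show ?thesis using False by (auto simp: g_def)
  qed
  have g_inj: "inj_on g S"
  proof (rule inj_onI, rule ccontr)
    fix x y assume xy: "x \<in> S" "y \<in> S" "g x = g y" "x \<noteq> y"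
    have shared: False if "u \<in> S" "w \<in> S" "u \<noteq> w" "w \<notin> isolated" "g u = g w" for u w
      using private_neighbour_notin[OF p(2)[of w] that(1)] g_nbhd[of u] that
      by (auto simp: g_def)
    show False
    proof (cases "x \<in> isolated \<and> y \<in> isolated")
      case True
      then show False using xy SV f_inj by (auto simp: g_def inj_on_def)
    next
      case False
      then show False using shared xy by metis
    qed
  qed
  have "card S \<le> card (V - S)"
    using card_inj_on_le[OF g_inj] g_outside fin by blast
  also have "\<dots> = card V - card S"
    using SV fin by (meson card_Diff_subset finite_subset)
  finally show ?thesis
    using card_mono[OF fin SV] by linarith
qed

lemma IR_attained:
  assumes "finite V"
  obtains S where "irredundant V E S" "IR V E = card S"
proof -
  let ?M = "{card S | S. irredundant V E S}"
  have "irredundant V E {}" unfolding irredundant_def by simp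
  then have "?M \<noteq> {}" by blast
  moreover have "finite ?M"
  proof (rule finite_subset)
    show "?M \<subseteq> {..card V}"
      using assms card_mono unfolding irredundant_def by fastforce
  qed simp
  ultimately have "Max ?M \<in> ?M" by (rule Max_in[rotated])
  then show ?thesis using that unfolding IR_def by blast
qed

lemma IR_le_half:
  assumes "finite V" "\<And>u v. E u v \<Longrightarrow> E v u"
    and "\<And>v. v \<in> V \<Longrightarrow> f v \<in> V" "inj_on f V"
    and "\<And>v. \<not> E v v" "\<And>v. v \<in> V \<Longrightarrow> E v (f v)"
  shows "2 * IR V E \<le> card V"
proof -
  obtain S where S: "irredundant V E S" "IR V E = card S" using IR_attained[OF assms(1)] .
  have "2 * card S \<le> card V"
    using assms(1) S(1) assms(2-6) by (rule irredundant_card_le_half)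
  then show ?thesis using S by simp
qed

lemma bij_betw_restrict_prodK_verts:
  "bij_betw (\<lambda>v. restrict v {1..t}) (prodK_verts t a b) (PiE {1..t} (\<lambda>i. {..<a i} \<times> {..<b i}))"
proof (rule bij_betwI')
  fix v w assume vw: "v \<in> prodK_verts t a b" "w \<in> prodK_verts t a b"
  show "(restrict v {1..t} = restrict w {1..t}) = (v = w)"
  proof
    assume eq: "restrict v {1..t} = restrict w {1..t}"
    show "v = w"
    proof
      fix i show "v i = w i"
        using vw fun_cong[OF eq, of i] unfolding prodK_verts_def by (cases "i \<in> {1..t}") auto
    qed
  qed simp
next
  fix v assume "v \<in> prodK_verts t a b"
  then show "restrict v {1..t} \<in> PiE {1..t} (\<lambda>i. {..<a i} \<times> {..<b i})"
    unfolding prodK_verts_def by (auto simp: mem_Times_iff)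
next
  fix g assume g: "g \<in> PiE {1..t} (\<lambda>i. {..<a i} \<times> {..<b i})"
  define v where "v i = (if i \<in> {1..t} then g i else (0, 0))" for i
  have "v \<in> prodK_verts t a b" using g unfolding v_def prodK_verts_def by (force simp: PiE_iff)
  moreover have "g = restrict v {1..t}" using g unfolding v_def by (auto simp: PiE_iff extensional_def)
  ultimately show "\<exists>v\<in>prodK_verts t a b. g = restrict v {1..t}" by blast
qed

lemma finite_prodK_verts: "finite (prodK_verts t a b)"
  using bij_betw_finite[OF bij_betw_restrict_prodK_verts] by (simp add: finite_PiE)

lemma card_prodK_verts: "card (prodK_verts t a b) = (\<Prod>i=1..t. a i * b i)"
  using bij_betw_same_card[OF bij_betw_restrict_prodK_verts]
  by (simp add: card_PiE card_cartesian_product)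

definition prodK_shift :: "nat \<Rightarrow> (nat \<Rightarrow> nat) \<Rightarrow> (nat \<Rightarrow> nat \<times> nat) \<Rightarrow> (nat \<Rightarrow> nat \<times> nat)" where
  "prodK_shift t b v = (\<lambda>i. if i \<in> {1..t} then (fst (v i), Suc (snd (v i)) mod b i) else v i)"

lemma Suc_mod_inj: "(p::nat) < b \<Longrightarrow> q < b \<Longrightarrow> Suc p mod b = Suc q mod b \<Longrightarrow> p = q"
  by (cases "Suc p = b"; cases "Suc q = b") auto

lemma Suc_mod_neq: "(p::nat) < b \<Longrightarrow> 2 \<le> b \<Longrightarrow> Suc p mod b \<noteq> p"
  by (cases "Suc p = b") auto

lemma prodK_shift_in: "v \<in> prodK_verts t a b \<Longrightarrow> prodK_shift t b v \<in> prodK_verts t a b"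
  unfolding prodK_verts_def prodK_shift_def by auto

lemma inj_on_prodK_shift: "inj_on (prodK_shift t b) (prodK_verts t a b)"
proof (rule inj_onI, rule ext)
  fix v w i assume vw: "v \<in> prodK_verts t a b" "w \<in> prodK_verts t a b"
    and eq: "prodK_shift t b v = prodK_shift t b w"
  show "v i = w i"
  proof (cases "i \<in> {1..t}")
    case True
    then have "fst (v i) = fst (w i)" "Suc (snd (v i)) mod b i = Suc (snd (w i)) mod b i"
      using fun_cong[OF eq, of i] unfolding prodK_shift_def by auto
    moreover have "snd (v i) < b i" "snd (w i) < b i"
      using vw True unfolding prodK_verts_def by auto
    ultimately show ?thesis using Suc_mod_inj by (metis prod.expand)
  next
    case False
    then show ?thesis using vw unfolding prodK_verts_def by auto
  qed
qed

lemma prodK_adj_shift: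
  assumes "v \<in> prodK_verts t a b" "\<forall>i\<in>{1..t}. 2 \<le> b i"
  shows "prodK_adj t v (prodK_shift t b v)"
  unfolding prodK_adj_def
proof
  fix i assume i: "i \<in> {1..t}"
  have "snd (v i) < b i" using assms(1) i unfolding prodK_verts_def by auto
  then have "Suc (snd (v i)) mod b i \<noteq> snd (v i)" using Suc_mod_neq assms(2) i by blast
  then show "snd (v i) \<noteq> snd (prodK_shift t b v i)" using i unfolding prodK_shift_def by simp
qed

lemma prodK_adj_irrefl: "1 \<le> t \<Longrightarrow> \<not> prodK_adj t v v"
  unfolding prodK_adj_def by auto

lemma IR_prodK_le_half:
  assumes "1 \<le> t" "\<forall>i\<in>{1..t}. 2 \<le> b i"
  shows "2 * IR (prodK_verts t a b) (prodK_adj t) \<le> (\<Prod>i=1..t. a i * b i)"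
  unfolding card_prodK_verts[symmetric]
proof (rule IR_le_half[where f = "prodK_shift t b"])
  show "prodK_adj t u v \<Longrightarrow> prodK_adj t v u" for u v unfolding prodK_adj_def by metis
  show "\<not> prodK_adj t v v" for v by (rule prodK_adj_irrefl[OF assms(1)])
  show "prodK_adj t v (prodK_shift t b v)" if "v \<in> prodK_verts t a b" for v
    using prodK_adj_shift[OF that assms(2)] .
qed (rule finite_prodK_verts, erule prodK_shift_in, rule inj_on_prodK_shift)

theorem theorem5p8:
  fixes t :: nat and a b :: "nat \<Rightarrow> nat"
  assumes "t \<ge> 1"
    and "\<forall>i\<in>{1..t}. a i \<ge> 1"
    and "2 \<le> b 1"
    and "\<forall>i j. 1 \<le> i \<and> i \<le> j \<and> j \<le> t \<longrightarrow> b i \<le> b j"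
  shows "real (IR (prodK_verts t a b) (prodK_adj t))
           \<le> real (b 1) / (2 * real (b 1) - 1) * (\<Prod>i=1..t. real (a i) * real (b i))"
proof -
  let ?n = "\<Prod>i=1..t. real (a i) * real (b i)"
  have "\<forall>i\<in>{1..t}. 2 \<le> b i" using assms(3,4) by fastforce
  then have "2 * IR (prodK_verts t a b) (prodK_adj t) \<le> (\<Prod>i=1..t. a i * b i)"
    using IR_prodK_le_half assms(1) by blast
  then have "real (IR (prodK_verts t a b) (prodK_adj t)) \<le> ?n / 2"
    by (simp add: field_simps flip: of_nat_mult of_nat_prod)
  also have "\<dots> \<le> real (b 1) / (2 * real (b 1) - 1) * ?n"
  proof -
    have "1 / 2 \<le> real (b 1) / (2 * real (b 1) - 1)" using assms(3) by (simp add: field_simps)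
    moreover have "0 \<le> ?n" by (simp add: prod_nonneg)
    ultimately have "1 / 2 * ?n \<le> real (b 1) / (2 * real (b 1) - 1) * ?n"
      by (rule mult_right_mono)
    then show ?thesis by simp
  qed
  finally show ?thesis .
qed

end
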